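(* Let $k\ge3$, $r\ge0$ and $n=3^k-1+2r$. Let $M$ be the closed surface carrying the polyhedral map $D_{\{2k,2k\}}(n)$. Then $M$ is orientable if $r$ is even and non-orientable if $r$ is odd.
   Context: Vertex set $\mathbb{Z}_n$; integers are read modulo $n$. Define $w_0=0$. Then successively subtract $3^{k-1}+r$ twice, then $3^{k-2}$ twice, $3^{k-3}$ twice, ..., and finally $3$ twice. This gives vertices $w_1,\dots,w_{2k-2}$, and one checks $w_{2k-2}\equiv 2\pmod n$. Let $P$ be the $2k$-gon with cyclically ordered boundary vertices $(0,w_1,\dots,w_{2k-3},2,1)$. The map $D_{\{2k,2k\}}(n)$ is the 2-dimensional cell complex whose 2-cells are the $n$ translates $P+i$, $i\in\mathbb{Z}_n$. It is a known standing fact (Datta) that this is a $\{2k,2k\}$-equivelar polyhedral map on a closed surface $M$: every 2-cell is a $2k$-gon, every vertex has degree $2k$, and any two 2-cells meet in the empty set, a common vertex, or a common edge. *)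

theory Defs
  imports Main
begin

text \<open>The map D_{2k,2k}(n) with n = 3^k - 1 + 2r, vertex set Z_n represented
  by the integers 0..n-1 (all vertex labels are reduced mod n).\<close>

definition D_n :: "nat \<Rightarrow> nat \<Rightarrow> int" where
  "D_n k r = 3 ^ k - 1 + 2 * int r"

definition D_steps :: "nat \<Rightarrow> nat \<Rightarrow> int list" where
  "D_steps k r = [3 ^ (k - 1) + int r, 3 ^ (k - 1) + int r] @
     concat (map (\<lambda>j. [3 ^ j, 3 ^ j]) (rev [1..<k - 1]))"

definition D_w :: "nat \<Rightarrow> nat \<Rightarrow> nat \<Rightarrow> int" where
  "D_w k r m = (- sum_list (take m (D_steps k r))) mod D_n k r"

definition D_P :: "nat \<Rightarrow> nat \<Rightarrow> int list" where
  "D_P k r = [0] @ map (D_w k r) [1..<2 * k - 2] @ [2, 1]"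

definition D_face :: "nat \<Rightarrow> nat \<Rightarrow> int \<Rightarrow> int list" where
  "D_face k r i = map (\<lambda>v. (v + i) mod D_n k r) (D_P k r)"

definition cyc_dedges :: "'a list \<Rightarrow> ('a \<times> 'a) set" where
  "cyc_dedges xs = {(xs ! j, xs ! ((j + 1) mod length xs)) | j. j < length xs}"

text \<open>A polygonal 2-complex with faces F i (i \<in> I) is (coherently) orientable if one
  can choose an orientation of every face so that no directed edge is traversed in
  the same direction by two distinct faces (i.e. each shared edge is traversed in
  opposite directions).\<close>
definition orientable_complex :: "'i set \<Rightarrow> ('i \<Rightarrow> 'a list) \<Rightarrow> bool" where
  "orientable_complex I F \<longleftrightarrow>
     (\<exists>ori :: 'i \<Rightarrow> bool.
        \<forall>i\<in>I. \<forall>j\<in>I. i \<noteq> j \<longrightarrow>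
          cyc_dedges (if ori i then F i else rev (F i)) \<inter>
          cyc_dedges (if ori j then F j else rev (F j)) = {})"

end

theory Submission
  imports Defs
begin

(* Every face of D_{2k,2k}(n) is a translate P + i of one base polygon P, and P is
   determined by its sequence of steps: walking along the boundary, the s-th edge goes
   from vertex P_s to P_s - d_s (mod n). The steps come in equal consecutive pairs
     a, a, 3^(k-2), 3^(k-2), ..., 3, 3, 1, 1     where a = 3^(k-1) + r. The
   concrete computations only need k \<ge> 2. *)

section \<open>Directed edges of cyclic boundaries\<close>

lemma cyc_dedges_map:
  "cyc_dedges (map f xs) = {(f (xs ! s), f (xs ! ((s + 1) mod length xs))) | s. s < length xs}"
proof -
  have "map f xs ! ((s + 1) mod length xs) = f (xs ! ((s + 1) mod length xs))"
    if "s < length xs" for s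
  proof -
    have "(s + 1) mod length xs < length xs"
      using that by (intro mod_less_divisor) auto
    then show ?thesis by simp
  qed
  then show ?thesis
    unfolding cyc_dedges_def by (metis (lifting) length_map nth_map)
qed

lemma cyc_dedges_rev_subset:
  assumes "(x, y) \<in> cyc_dedges (rev xs)"
  shows "(y, x) \<in> cyc_dedges xs"
proof -
  let ?L = "length xs"
  from assms obtain j where j: "j < ?L" "x = rev xs ! j" "y = rev xs ! ((j + 1) mod ?L)"
    unfolding cyc_dedges_def by auto
  define t where "t = ?L - 1 - (j + 1) mod ?L"
  have t_less: "t < ?L"
    using j(1) unfolding t_def by simp
  have t_succ: "(t + 1) mod ?L = ?L - 1 - j"
  proof (cases "j + 1 < ?L")
    case True
    then show ?thesis unfolding t_def by simp
  next
    case False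
    then have "j + 1 = ?L"
      using j(1) by simp
    then have "t = ?L - 1"
      unfolding t_def by simp
    moreover have "t + 1 = ?L"
      using \<open>t = ?L - 1\<close> j(1) by simp
    ultimately show ?thesis
      using \<open>j + 1 = ?L\<close> by simp
  qed
  have "(j + 1) mod ?L < ?L"
    using j(1) by (intro mod_less_divisor) auto
  then have "y = xs ! t"
    unfolding j(3) t_def by (simp add: rev_nth)
  moreover have "x = xs ! ((t + 1) mod ?L)"
    using j(1) unfolding j(2) t_succ by (simp add: rev_nth)
  ultimately show ?thesis
    using t_less unfolding cyc_dedges_def by blast
qed

lemma cyc_dedges_rev: "cyc_dedges (rev xs) = prod.swap ` cyc_dedges xs"
proof
  show "cyc_dedges (rev xs) \<subseteq> prod.swap ` cyc_dedges xs"
    using cyc_dedges_rev_subset by (fastforce intro: rev_image_eqI)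
  show "prod.swap ` cyc_dedges xs \<subseteq> cyc_dedges (rev xs)"
    using cyc_dedges_rev_subset[where xs = "rev xs"] by auto
qed

lemma cyc_dedges_oriented:
  "e \<in> cyc_dedges (if b then xs else rev xs) \<longleftrightarrow>
   (if b then e else prod.swap e) \<in> cyc_dedges xs"
proof (cases b)
  case False
  have "e \<in> prod.swap ` cyc_dedges xs \<longleftrightarrow> prod.swap e \<in> cyc_dedges xs"
    by (metis image_iff swap_swap)
  then show ?thesis
    using False by (simp add: cyc_dedges_rev)
qed simp

section \<open>Translation complexes\<close>

definition translate_face :: "int \<Rightarrow> int list \<Rightarrow> int \<Rightarrow> int list" where
  "translate_face n P i = map (\<lambda>v. (v + i) mod n) P"

definition boundary_steps :: "int \<Rightarrow> int list \<Rightarrow> (nat \<Rightarrow> int) \<Rightarrow> bool" where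
  "boundary_steps n P d \<longleftrightarrow>
     (\<forall>s < length P. P ! ((s + 1) mod length P) mod n = (P ! s - d s) mod n)"

definition step_edge :: "int \<Rightarrow> int list \<Rightarrow> (nat \<Rightarrow> int) \<Rightarrow> int \<Rightarrow> nat \<Rightarrow> int \<times> int" where
  "step_edge n P d i s = ((P ! s + i) mod n, (P ! s - d s + i) mod n)"

lemma translate_face_edges:
  assumes "boundary_steps n P d"
  shows "cyc_dedges (translate_face n P i) = step_edge n P d i ` {..<length P}"
proof -
  have "(P ! ((s + 1) mod length P) + i) mod n = (P ! s - d s + i) mod n"
    if "s < length P" for s
    using assms that unfolding boundary_steps_def by (metis mod_add_left_eq)
  then show ?thesis
    unfolding translate_face_def cyc_dedges_map step_edge_def by auto
qed

lemma step_edge_same_direction: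
  assumes "step_edge n P d i s = step_edge n P d j t"
  shows "n dvd d s - d t"
proof -
  have "n dvd (P ! s + i) - (P ! t + j)" "n dvd (P ! s - d s + i) - (P ! t - d t + j)"
    using assms unfolding step_edge_def by (simp_all add: mod_eq_dvd_iff)
  then have "n dvd ((P ! s + i) - (P ! t + j)) - ((P ! s - d s + i) - (P ! t - d t + j))"
    by (rule dvd_diff)
  then show ?thesis
    by (simp add: algebra_simps)
qed

lemma step_edge_opposite_direction:
  assumes "step_edge n P d i s = prod.swap (step_edge n P d j t)"
  shows "n dvd d s + d t"
proof -
  have "n dvd (P ! s + i) - (P ! t - d t + j)" "n dvd (P ! s - d s + i) - (P ! t + j)"
    using assms unfolding step_edge_def by (simp_all add: mod_eq_dvd_iff)
  then have "n dvd ((P ! s + i) - (P ! t - d t + j)) - ((P ! s - d s + i) - (P ! t + j))"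
    by (rule dvd_diff)
  then show ?thesis
    by (simp add: algebra_simps)
qed

lemma repeated_step_shared_edge:
  assumes "boundary_steps n P d" "s + 1 < length P" "d s = c" "d (s + 1) = c"
  shows "step_edge n P d i s = step_edge n P d (i + c) (s + 1)"
proof -
  have "(s + 1) mod length P = s + 1"
    using assms(2) by simp
  then have next_vertex: "P ! (s + 1) mod n = (P ! s - c) mod n"
    using assms unfolding boundary_steps_def by (metis Suc_lessD Suc_eq_plus1)
  have "(P ! (s + 1) + (i + c)) mod n = (P ! s - c + (i + c)) mod n"
    using next_vertex by (metis mod_add_left_eq)
  moreover have "(P ! (s + 1) + i) mod n = (P ! s - c + i) mod n"
    using next_vertex by (metis mod_add_left_eq)
  ultimately show ?thesis
    using assms(3,4) unfolding step_edge_def by simp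
qed

lemma boundary_parity:
  assumes "boundary_steps n P d" "even n" "\<And>s. s < length P \<Longrightarrow> odd (d s)"
    and "s < length P"
  shows "even (P ! s) \<longleftrightarrow> (even (P ! 0) \<longleftrightarrow> even s)"
  using assms(4)
proof (induction s)
  case 0
  then show ?case by simp
next
  case (Suc s)
  then have "P ! (Suc s) mod n = (P ! s - d s) mod n"
    using assms(1) unfolding boundary_steps_def by (metis Suc_eq_plus1 Suc_lessD mod_less)
  then have "n dvd P ! (Suc s) - (P ! s - d s)"
    by (simp add: mod_eq_dvd_iff)
  then have "even (P ! (Suc s) - (P ! s - d s))"
    using \<open>even n\<close> dvd_trans by blast
  then show ?case
    using Suc assms(3)[of s] by auto
qed

text \<open>Odd steps that are distinct up to the pairing of consecutive steps, and small
  compared to an even n, allow the coherent orientation "P + i is positive iff i is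
  even".\<close>
lemma translate_complex_orientable:
  assumes steps: "boundary_steps n P d"
    and bounds: "\<And>s. s < length P \<Longrightarrow> 0 < d s \<and> 2 * d s < n"
    and paired: "\<And>s t. s < length P \<Longrightarrow> t < length P \<Longrightarrow> d s = d t \<Longrightarrow> s div 2 = t div 2"
    and odd_steps: "\<And>s. s < length P \<Longrightarrow> odd (d s)"
    and "even n" "even (P ! 0)"
  shows "orientable_complex {0..<n} (translate_face n P)"
proof -
  let ?E = "step_edge n P d"
  have parity: "even (P ! s) \<longleftrightarrow> even s" if "s < length P" for s
    using boundary_parity[OF steps \<open>even n\<close> odd_steps that] \<open>even (P ! 0)\<close> by simp
  have same_face: "i = j"
    if ij: "i \<in> {0..<n}" "j \<in> {0..<n}" "even i \<longleftrightarrow> even j"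
      and st: "s < length P" "t < length P" and shared: "?E i s = ?E j t" for i j s t
  proof -
    have "n dvd d s - d t"
      using shared by (rule step_edge_same_direction)
    then have "d s mod n = d t mod n"
      by (simp add: mod_eq_dvd_iff)
    then have "d s = d t"
      using bounds[OF st(1)] bounds[OF st(2)] by simp
    then have "s div 2 = t div 2"
      using paired st by blast
    have vertex: "(P ! s + i) mod n = (P ! t + j) mod n"
      using shared unfolding step_edge_def by simp
    then have "n dvd (P ! s + i) - (P ! t + j)"
      by (simp add: mod_eq_dvd_iff)
    then have "even ((P ! s + i) - (P ! t + j))"
      using \<open>even n\<close> dvd_trans by blast
    then have "even s \<longleftrightarrow> even t"
      using parity[OF st(1)] parity[OF st(2)] ij(3) by auto
    with \<open>s div 2 = t div 2\<close> have "s = t"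
      by (metis div_mult_mod_eq even_iff_mod_2_eq_zero odd_iff_mod_2_eq_one)
    then have "n dvd i - j"
      using vertex by (simp add: mod_eq_dvd_iff)
    then show "i = j"
      using ij(1,2) by (metis atLeastLessThan_iff mod_eq_dvd_iff mod_pos_pos_trivial)
  qed
  have no_reversal: False
    if "s < length P" "t < length P" "?E i s = prod.swap (?E j t)" for i j s t
  proof -
    have "n dvd d s + d t"
      using that(3) by (rule step_edge_opposite_direction)
    moreover have "0 < d s + d t" "d s + d t < n"
      using bounds[OF that(1)] bounds[OF that(2)] by linarith+
    ultimately show False
      using zdvd_not_zless by blast
  qed
  show ?thesis
    unfolding orientable_complex_def
  proof (intro exI[of _ even] ballI impI)
    fix i j :: int
    assume ij: "i \<in> {0..<n}" "j \<in> {0..<n}" "i \<noteq> j"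
    show "cyc_dedges (if even i then translate_face n P i else rev (translate_face n P i)) \<inter>
          cyc_dedges (if even j then translate_face n P j else rev (translate_face n P j)) = {}"
    proof (rule ccontr)
      assume "\<not> ?thesis"
      then obtain e where
        "e \<in> cyc_dedges (if even i then translate_face n P i else rev (translate_face n P i))"
        "e \<in> cyc_dedges (if even j then translate_face n P j else rev (translate_face n P j))"
        by blast
      then have "(if even i then e else prod.swap e) \<in> ?E i ` {..<length P}"
        "(if even j then e else prod.swap e) \<in> ?E j ` {..<length P}"
        unfolding cyc_dedges_oriented translate_face_edges[OF steps] by simp_all
      then obtain s t where st: "s < length P" "t < length P"
        and es: "(if even i then e else prod.swap e) = ?E i s"
        and et: "(if even j then e else prod.swap e) = ?E j t"
        by blast
      show False
      proof (cases "even i \<longleftrightarrow> even j")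
        case True
        then have "?E i s = ?E j t"
          using es et by (auto split: if_splits)
        then show False
          using same_face ij st True by blast
      next
        case False
        then have "?E i s = prod.swap (?E j t)"
          using es et by (cases "even i") (simp_all, metis swap_swap)
        then show False
          using no_reversal st by blast
      qed
    qed
  qed
qed

lemma translate_complex_nonorientable:
  assumes steps: "boundary_steps n P d" and L: "length P = L" "L \<ge> 3"
    and first: "d 0 = a" "d 1 = a" and last: "d (L - 2) = 1" "d (L - 1) = 1"
    and a: "0 < a" "a < n" "even a"
  shows "\<not> orientable_complex {0..<n} (translate_face n P)"
proof
  let ?E = "step_edge n P d"
  assume "orientable_complex {0..<n} (translate_face n P)"
  then obtain ori where ori: "\<And>i j. i \<in> {0..<n} \<Longrightarrow> j \<in> {0..<n} \<Longrightarrow> i \<noteq> j \<Longrightarrow>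
      cyc_dedges (if ori i then translate_face n P i else rev (translate_face n P i)) \<inter>
      cyc_dedges (if ori j then translate_face n P j else rev (translate_face n P j)) = {}"
    unfolding orientable_complex_def by blast
  have opposite: "ori i \<noteq> ori j"
    if "i \<in> {0..<n}" "j \<in> {0..<n}" "i \<noteq> j" "s < L" "t < L" "?E i s = ?E j t" for i j s t
  proof
    assume "ori i = ori j"
    let ?e = "if ori i then ?E i s else prod.swap (?E i s)"
    have "?e \<in> cyc_dedges (if ori i then translate_face n P i else rev (translate_face n P i))"
      "?e \<in> cyc_dedges (if ori j then translate_face n P j else rev (translate_face n P j))"
      using that \<open>ori i = ori j\<close> L
      by (auto simp: cyc_dedges_oriented translate_face_edges[OF steps] intro!: image_eqI)
    then show False
      using ori[OF that(1-3)] by blast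
  qed
  have "L - 2 + 1 = L - 1"
    using L by simp
  then have "?E i (L - 2) = ?E (i + 1) (L - 1)" for i
    using repeated_step_shared_edge[OF steps, of "L - 2" 1 i] L last by simp
  then have alternate: "ori (i + 1) \<noteq> ori i" if "0 \<le> i" "i + 1 < n" for i
    using opposite[of i "i + 1" "L - 2" "L - 1"] that L by (auto simp: Suc_diff_Suc)
  have ori_parity: "ori (int m) \<longleftrightarrow> (ori 0 \<longleftrightarrow> even m)" if "int m < n" for m
    using that
  proof (induction m)
    case 0
    then show ?case by simp
  next
    case (Suc m)
    then show ?case
      using alternate[of "int m"] by (auto simp: add.commute)
  qed
  have "ori a = ori 0"
    using ori_parity[of "nat a"] a by (simp add: even_nat_iff)
  moreover have "?E 0 0 = ?E a 1"
    using repeated_step_shared_edge[OF steps, of 0 a 0] L first by simp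
  ultimately show False
    using opposite[of 0 a 0 1] a L by auto
qed

section \<open>The step sequence of D_{2k,2k}(n)\<close>

definition D_step :: "nat \<Rightarrow> nat \<Rightarrow> nat \<Rightarrow> int" where
  "D_step k r s = (if s < 2 then 3 ^ (k - 1) + int r else 3 ^ (k - 1 - s div 2))"

lemma concat_pairs_length: "length (concat (map (\<lambda>j. [f j, f j]) xs)) = 2 * length xs"
  by (induction xs) auto

lemma concat_pairs_nth:
  "t < 2 * length xs \<Longrightarrow> concat (map (\<lambda>j. [f j, f j]) xs) ! t = f (xs ! (t div 2))"
proof (induction xs arbitrary: t)
  case Nil
  then show ?case by simp
next
  case (Cons x xs)
  show ?case
  proof (cases "t < 2")
    case True
    then show ?thesis by (cases t) (auto simp: nth_Cons')
  next
    case False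
    then obtain u where "t = Suc (Suc u)"
      by (metis add_2_eq_Suc le_add_diff_inverse not_less)
    then show ?thesis
      using Cons by simp
  qed
qed

lemma D_steps_eq:
  assumes "k \<ge> 2"
  shows "D_steps k r = map (D_step k r) [0..<2 * k - 2]"
proof (rule nth_equalityI)
  let ?xs = "rev [1..<k - 1]"
  show len: "length (D_steps k r) = length (map (D_step k r) [0..<2 * k - 2])"
    using assms unfolding D_steps_def by (simp add: concat_pairs_length)
  fix s
  assume "s < length (D_steps k r)"
  then have s: "s < 2 * k - 2"
    using len by simp
  show "D_steps k r ! s = map (D_step k r) [0..<2 * k - 2] ! s"
  proof (cases "s < 2")
    case True
    then show ?thesis
      using s unfolding D_steps_def D_step_def by (cases s) (auto simp: nth_Cons')
  next
    case False
    then obtain u where u: "s = Suc (Suc u)"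
      by (metis add_2_eq_Suc le_add_diff_inverse not_less)
    then have u_less: "u < 2 * length ?xs" "u div 2 < k - 2"
      using s by auto
    have "?xs ! (u div 2) = k - 1 - s div 2"
      using u_less(2) u by (simp add: rev_nth nth_upt)
    then have "D_steps k r ! s = 3 ^ (k - 1 - s div 2)"
      unfolding D_steps_def u using concat_pairs_nth[OF u_less(1)] by simp
    then show ?thesis
      using s False unfolding D_step_def by simp
  qed
qed

text \<open>The first m pairs of steps sum to 2a + 2 (3^(k-2) + ... + 3^(k-m)), which is
  2a + 3^(k-1) - 3^(k-m) by the geometric sum formula.\<close>
lemma D_step_partial_sum:
  assumes "1 \<le> m" "m \<le> k - 1"
  shows "(\<Sum>t<2 * m. D_step k r t) = 2 * (3 ^ (k - 1) + int r) + 3 ^ (k - 1) - 3 ^ (k - m)"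
  using assms
proof (induction m)
  case 0
  then show ?case by simp
next
  case (Suc m)
  have split: "(\<Sum>t<2 * Suc m. D_step k r t) =
      (\<Sum>t<2 * m. D_step k r t) + D_step k r (2 * m) + D_step k r (2 * m + 1)"
    by (simp add: algebra_simps)
  show ?case
  proof (cases "m = 0")
    case True
    then show ?thesis
      using split by (simp add: D_step_def)
  next
    case False
    have "k - m = Suc (k - Suc m)"
      using Suc.prems by simp
    then have "(3::int) ^ (k - m) = 3 * 3 ^ (k - Suc m)"
      by simp
    moreover have "D_step k r (2 * m) = 3 ^ (k - Suc m)" "D_step k r (2 * m + 1) = 3 ^ (k - Suc m)"
      using False unfolding D_step_def by auto
    ultimately show ?thesis
      using split Suc False by simp
  qed
qed

lemma three_pow_pred: "k \<ge> 1 \<Longrightarrow> (3::int) ^ k = 3 * 3 ^ (k - 1)"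
  by (cases k) simp_all

text \<open>The 2k - 2 listed subtrahends add up to n - 2, which brings the walk to vertex 2.\<close>
lemma D_step_total:
  assumes "k \<ge> 2"
  shows "(\<Sum>t<2 * k - 2. D_step k r t) = D_n k r - 2"
proof -
  have "(\<Sum>t<2 * (k - 1). D_step k r t) = 2 * (3 ^ (k - 1) + int r) + 3 ^ (k - 1) - 3 ^ 1"
    using D_step_partial_sum[of "k - 1" k r] assms by simp
  moreover have "2 * k - 2 = 2 * (k - 1)"
    by simp
  ultimately show ?thesis
    using three_pow_pred[of k] assms unfolding D_n_def by simp
qed

lemma D_w_sum:
  assumes "k \<ge> 2" "s \<le> 2 * k - 2"
  shows "D_w k r s = (- (\<Sum>t<s. D_step k r t)) mod D_n k r"
  using assms(2) unfolding D_w_def D_steps_eq[OF assms(1)]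
  by (simp add: take_map sum_list_sum_nth atLeast0LessThan min_def)

text \<open>n > 2, so that 1 and 2 are distinct vertices different from 0.\<close>
lemma D_n_gt_2: "k \<ge> 2 \<Longrightarrow> D_n k r > 2"
proof -
  assume "k \<ge> 2"
  then have "(3::int) ^ 2 \<le> 3 ^ k"
    by (intro power_increasing) auto
  then show ?thesis
    unfolding D_n_def by simp
qed

lemma D_w_last:
  assumes "k \<ge> 2"
  shows "D_w k r (2 * k - 2) = 2"
proof -
  have "D_w k r (2 * k - 2) = (- (D_n k r - 2)) mod D_n k r"
    using D_w_sum[OF assms order_refl] D_step_total[OF assms] by simp
  also have "\<dots> = (2 + (-1) * D_n k r) mod D_n k r"
    by simp
  also have "\<dots> = 2 mod D_n k r"
    by (rule mod_mult_self1)
  also have "\<dots> = 2"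
    using D_n_gt_2[OF assms] by simp
  finally show ?thesis .
qed

lemma D_P_nth:
  assumes "k \<ge> 2" "s \<le> 2 * k - 2"
  shows "D_P k r ! s = D_w k r s"
proof (cases "s < 2 * k - 2")
  case True
  then show ?thesis
    unfolding D_P_def by (cases s) (auto simp: nth_append D_w_def)
next
  case False
  then have "s = 2 * k - 2"
    using assms(2) by simp
  then show ?thesis
    unfolding D_P_def using assms(1) D_w_last[OF assms(1)] by (simp add: nth_append)
qed

lemma D_P_first: "D_P k r ! 0 = 0"
  unfolding D_P_def by simp

lemma D_P_length: "k \<ge> 2 \<Longrightarrow> length (D_P k r) = 2 * k"
  unfolding D_P_def by simp

lemma D_P_last:
  assumes "k \<ge> 2"
  shows "D_P k r ! (2 * k - 1) = 1"
proof -
  let ?xs = "map (D_w k r) [1..<2 * k - 2]"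
  have "2 * k - 1 = Suc (length ?xs + 1)"
    using assms by simp
  then have "D_P k r ! (2 * k - 1) = (?xs @ [2, 1]) ! (length ?xs + 1)"
    unfolding D_P_def by simp
  also have "\<dots> = 1"
    by (subst nth_append_length_plus) simp
  finally show ?thesis .
qed

lemma D_step_last: "k \<ge> 2 \<Longrightarrow> D_step k r (2 * k - 2) = 1 \<and> D_step k r (2 * k - 1) = 1"
  unfolding D_step_def by auto

lemma D_P_boundary_steps:
  assumes "k \<ge> 2"
  shows "boundary_steps (D_n k r) (D_P k r) (D_step k r)"
  unfolding boundary_steps_def D_P_length[OF assms]
proof (intro allI impI)
  fix s
  assume s: "s < 2 * k"
  consider "s < 2 * k - 2" | "s = 2 * k - 2" | "s = 2 * k - 1"
    using s by linarith
  then show "D_P k r ! ((s + 1) mod (2 * k)) mod D_n k r = (D_P k r ! s - D_step k r s) mod D_n k r"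
  proof cases
    case 1
    have "D_P k r ! (s + 1) = (- (\<Sum>t<s. D_step k r t) - D_step k r s) mod D_n k r"
      using 1 D_P_nth[OF assms, of "s + 1"] D_w_sum[OF assms, of "s + 1"] by simp
    also have "\<dots> = (D_P k r ! s - D_step k r s) mod D_n k r"
      using 1 D_P_nth[OF assms, of s] D_w_sum[OF assms, of s] by (simp add: mod_diff_left_eq)
    finally show ?thesis
      using 1 s by simp
  next
    case 2
    have "(s + 1) mod (2 * k) = 2 * k - 1"
      using 2 assms by simp
    then show ?thesis
      using 2 D_P_last[OF assms] D_P_nth[OF assms, of s] D_w_last[OF assms] D_step_last[OF assms]
      by simp
  next
    case 3
    have "(s + 1) mod (2 * k) = 0"
      using 3 assms by simp
    then show ?thesis
      using 3 D_P_first D_P_last[OF assms] D_step_last[OF assms] by simp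
  qed
qed

lemma D_step_bounds:
  assumes "k \<ge> 2"
  shows "0 < D_step k r s \<and> 2 * D_step k r s < D_n k r"
proof -
  have pow: "(3::int) ^ k = 3 * 3 ^ (k - 1)" "(3::int) ^ (k - 1) \<ge> 3"
    using three_pow_pred[of k] assms self_le_power[of 3 "k - 1"] by auto
  have "D_step k r s \<le> 3 ^ (k - 1) + int r"
  proof (cases "s < 2")
    case False
    have "(3::int) ^ (k - 1 - s div 2) \<le> 3 ^ (k - 1)"
      by (intro power_increasing) auto
    moreover have "D_step k r s = 3 ^ (k - 1 - s div 2)"
      using False unfolding D_step_def by simp
    ultimately show ?thesis
      by linarith
  qed (simp add: D_step_def)
  moreover have "0 < D_step k r s"
    unfolding D_step_def by (simp add: add_pos_nonneg)
  ultimately show ?thesis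
    using pow unfolding D_n_def by linarith
qed

lemma D_step_paired:
  assumes "k \<ge> 2" "s < 2 * k" "t < 2 * k" "D_step k r s = D_step k r t"
  shows "s div 2 = t div 2"
proof -
  have smaller: "(3::int) ^ (k - 1 - u div 2) < 3 ^ (k - 1) + int r" if "\<not> u < 2" "u < 2 * k" for u
  proof -
    have "(3::int) ^ (k - 1 - u div 2) < 3 ^ (k - 1)"
      using that assms(1) by (intro power_strict_increasing) auto
    then show ?thesis by linarith
  qed
  consider "s < 2" "t < 2" | "\<not> s < 2" "\<not> t < 2" | "s < 2 \<longleftrightarrow> \<not> t < 2"
    by blast
  then show ?thesis
  proof cases
    case 1
    then show ?thesis by simp
  next
    case 2
    then have "k - 1 - s div 2 = k - 1 - t div 2"
      using assms(4) unfolding D_step_def by (simp add: power_inject_exp)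
    then show ?thesis
      using assms(2,3) by linarith
  next
    case 3
    then show ?thesis
      using assms smaller[of s] smaller[of t] unfolding D_step_def by (auto split: if_splits)
  qed
qed

text \<open>All steps but the initial pair are powers of 3; the initial ones have the parity of
  r + 1.\<close>
lemma D_step_odd: "odd (D_step k r s) \<longleftrightarrow> (s < 2 \<longrightarrow> even r)"
  unfolding D_step_def by auto

lemma D_face_translate: "D_face k r = translate_face (D_n k r) (D_P k r)"
  unfolding D_face_def translate_face_def by simp

text \<open>For even r all steps are odd: parity of the translation gives a coherent
  orientation.\<close>
lemma D_orientable:
  assumes k: "k \<ge> 2" and "even r"
  shows "orientable_complex {0..<D_n k r} (D_face k r)"
  unfolding D_face_translate
proof (rule translate_complex_orientable[OF D_P_boundary_steps[OF k]])
  show "0 < D_step k r s \<and> 2 * D_step k r s < D_n k r" for s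
    using D_step_bounds[OF k] .
  show "s div 2 = t div 2"
    if "s < length (D_P k r)" "t < length (D_P k r)" "D_step k r s = D_step k r t" for s t
    using D_step_paired[OF k _ _ that(3)] that(1,2) unfolding D_P_length[OF k] .
  show "odd (D_step k r s)" for s
    using \<open>even r\<close> D_step_odd by simp
  show "even (D_n k r)" "even (D_P k r ! 0)"
    unfolding D_n_def D_P_first by simp_all
qed

text \<open>For odd r the first step a = 3^(k-1) + r is even, while the last step is 1.\<close>
lemma D_nonorientable:
  assumes k: "k \<ge> 2" and "odd r"
  shows "\<not> orientable_complex {0..<D_n k r} (D_face k r)"
  unfolding D_face_translate
proof (rule translate_complex_nonorientable[OF D_P_boundary_steps[OF k] D_P_length[OF k],
      where a = "3 ^ (k - 1) + int r"])
  show "D_step k r 0 = 3 ^ (k - 1) + int r" "D_step k r 1 = 3 ^ (k - 1) + int r"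
    "0 < 3 ^ (k - 1) + int r" "even (3 ^ (k - 1) + int r)"
    using \<open>odd r\<close> unfolding D_step_def by (auto simp: add_pos_nonneg)
  show "D_step k r (2 * k - 2) = 1" "D_step k r (2 * k - 1) = 1"
    using D_step_last[OF k] by auto
  show "3 ^ (k - 1) + int r < D_n k r"
    using D_step_bounds[OF k, of r 0] unfolding D_step_def by simp
qed (use k in simp)

theorem mainTheorem17:
  fixes k r :: nat
  assumes "k \<ge> 3"
  shows "orientable_complex {0..<D_n k r} (D_face k r) \<longleftrightarrow> even r"
proof -
  have "k \<ge> 2"
    using assms by simp
  then show ?thesis
    using D_orientable D_nonorientable by blast
qed

end
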